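(* Let $x_1,\dots,x_u$ be complex indeterminates and let $X$ be a full QOD$(n;s_1,\dots,s_u)$, written as $X=\begin{bmatrix}X_1\\ X_2\end{bmatrix}$, where $X_1$ is the $m\times n$ submatrix consisting of $m$ of the rows of $X$. Suppose there are $\alpha,\beta\in\mathbb{H}$ with $|\alpha|=|\beta|$ such that one of the following holds: (a) every off-diagonal entry of $X_1^*X_1$ is of the form $\pm\varepsilon c\, x_1^{\ell_1}\cdots x_u^{\ell_u}(x_1^* )^{\ell'_1}\cdots(x_u^* )^{\ell'_u}$ with $\ell_i,\ell'_i\in\mathbb{Z}_{\ge0}$, $\varepsilon\in\{1,i,j,k\}$, $c\in\{\alpha,\alpha^*,\beta,\beta^*\}$; or (b) every off-diagonal entry of $X_1^*X_1$ is of the form $\pm\varepsilon c\,\sigma$ with $\varepsilon\in\{1,i,j,k\}$, $c\in\{\alpha,\alpha^*,\beta,\beta^*\}$, where $\sigma=\sum_{\ell=1}^u s_\ell|x_\ell|^2$. Then, for every assignment of complex numbers to $x_1,\dots,x_u$ with $|x_1|=\cdots=|x_u|=1$, the $n$ column vectors of $X_1$ form an equiangular tight frame for $\mathbb{H}^m$ with frame constant $n$.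
   Context: $\mathbb{H}$ denotes the real quaternions with $i^2=j^2=k^2=ijk=-1$; for a matrix $M$ over $\mathbb{H}$, $M^*$ is its conjugate transpose. A (restricted) quaternionic orthogonal design QOD$(n;s_1,\dots,s_u)$ in complex indeterminates $x_1,\dots,x_u$ is an $n\times n$ matrix $X$ with entries from $\{0,\pm\varepsilon x_\ell,\pm\varepsilon x_\ell^*: 1\le \ell\le u,\ \varepsilon\in\{1,i,j,k\}\}$ such that $XX^*=\sigma I_n$ with $\sigma=\sum_{\ell=1}^u s_\ell|x_\ell|^2$; it is full if $\sum_\ell s_\ell=n$. A sequence $v_1,\dots,v_n\in\mathbb{H}^m$ is a frame if there are constants $A,B>0$ with $A\|v\|^2\le\sum_{\ell=1}^n|\langle v,v_\ell\rangle|^2\le B\|v\|^2$ for all $v\in\mathbb{H}^m$; it is tight (with frame constant $A$) if one can take $A=B$; a tight frame is equiangular if, with $V=[v_1\ \cdots\ v_n]$, all off-diagonal entries of $V^*V$ have the same absolute value. *)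

theory Defs
  imports Complex_Main
begin

datatype quat = Quat (qre: real) (qim1: real) (qim2: real) (qim3: real)

instantiation quat :: ab_group_add
begin
definition "0 = Quat 0 0 0 0"
definition "p + q = Quat (qre p + qre q) (qim1 p + qim1 q) (qim2 p + qim2 q) (qim3 p + qim3 q)"
definition "- p = Quat (- qre p) (- qim1 p) (- qim2 p) (- qim3 p)"
definition "p - q = Quat (qre p - qre q) (qim1 p - qim1 q) (qim2 p - qim2 q) (qim3 p - qim3 q)"
instance
  by standard (auto simp: zero_quat_def plus_quat_def uminus_quat_def minus_quat_def)
end

instantiation quat :: "{one, times}"
begin
definition "1 = Quat 1 0 0 0"
text \<open>Hamilton product, with i*i = j*j = k*k = i*j*k = -1.\<close>
definition "p * q = Quat
   (qre p * qre q - qim1 p * qim1 q - qim2 p * qim2 q - qim3 p * qim3 q)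
   (qre p * qim1 q + qim1 p * qre q + qim2 p * qim3 q - qim3 p * qim2 q)
   (qre p * qim2 q - qim1 p * qim3 q + qim2 p * qre q + qim3 p * qim1 q)
   (qre p * qim3 q + qim1 p * qim2 q - qim2 p * qim1 q + qim3 p * qre q)"
instance ..
end

definition qI :: quat where "qI = Quat 0 1 0 0"
definition qJ :: quat where "qJ = Quat 0 0 1 0"
definition qK :: quat where "qK = Quat 0 0 0 1"

definition qcnj :: "quat \<Rightarrow> quat" where
  "qcnj p = Quat (qre p) (- qim1 p) (- qim2 p) (- qim3 p)"

definition qabs :: "quat \<Rightarrow> real" where
  "qabs p = sqrt ((qre p)^2 + (qim1 p)^2 + (qim2 p)^2 + (qim3 p)^2)"

definition quat_of_real :: "real \<Rightarrow> quat" where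
  "quat_of_real r = Quat r 0 0 0"
definition quat_of_complex :: "complex \<Rightarrow> quat" where
  "quat_of_complex z = Quat (Re z) (Im z) 0 0"

datatype qunit = U1 | Ui | Uj | Uk

fun qunit_val :: "qunit \<Rightarrow> quat" where
  "qunit_val U1 = 1" | "qunit_val Ui = qI" | "qunit_val Uj = qJ" | "qunit_val Uk = qK"

text \<open>A formal entry of a QOD: 0, or (-1)^neg * \<epsilon> * x_l, or (-1)^neg * \<epsilon> * x_l^*.
  Indeterminates are indexed by l \<in> {0..<u}.\<close>
datatype qod_entry = QZero | QVar (neg: bool) (unit: qunit) (var: nat) (conjd: bool)

fun qod_entry_ok :: "nat \<Rightarrow> qod_entry \<Rightarrow> bool" where
  "qod_entry_ok u QZero = True"
| "qod_entry_ok u (QVar ng e l cj) = (l < u)"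

fun qod_entry_eval :: "(nat \<Rightarrow> complex) \<Rightarrow> qod_entry \<Rightarrow> quat" where
  "qod_entry_eval x QZero = 0"
| "qod_entry_eval x (QVar ng e l cj) =
     (if ng then -1 else 1) * qunit_val e * quat_of_complex (if cj then cnj (x l) else x l)"

definition qod_eval :: "(nat \<Rightarrow> nat \<Rightarrow> qod_entry) \<Rightarrow> (nat \<Rightarrow> complex) \<Rightarrow> nat \<Rightarrow> nat \<Rightarrow> quat" where
  "qod_eval X x r c = qod_entry_eval x (X r c)"

definition qod_sigma :: "nat \<Rightarrow> (nat \<Rightarrow> nat) \<Rightarrow> (nat \<Rightarrow> complex) \<Rightarrow> real" where
  "qod_sigma u s x = (\<Sum>l<u. real (s l) * (cmod (x l))^2)"

text \<open>X is a QOD(n; s_0,...,s_{u-1}): an n x n matrix of admissible entries with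
  X X^* = \<sigma> I_n (as an identity in the complex indeterminates, i.e. for all assignments).\<close>
definition is_QOD :: "nat \<Rightarrow> nat \<Rightarrow> (nat \<Rightarrow> nat) \<Rightarrow> (nat \<Rightarrow> nat \<Rightarrow> qod_entry) \<Rightarrow> bool" where
  "is_QOD n u s X \<longleftrightarrow>
     (\<forall>r<n. \<forall>c<n. qod_entry_ok u (X r c)) \<and>
     (\<forall>x. \<forall>r<n. \<forall>r'<n.
        (\<Sum>c<n. qod_eval X x r c * qcnj (qod_eval X x r' c))
          = (if r = r' then quat_of_real (qod_sigma u s x) else 0))"

definition is_full_QOD :: "nat \<Rightarrow> nat \<Rightarrow> (nat \<Rightarrow> nat) \<Rightarrow> (nat \<Rightarrow> nat \<Rightarrow> qod_entry) \<Rightarrow> bool" where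
  "is_full_QOD n u s X \<longleftrightarrow> is_QOD n u s X \<and> (\<Sum>l<u. s l) = n"

definition cmonomial :: "nat \<Rightarrow> (nat \<Rightarrow> complex) \<Rightarrow> (nat \<Rightarrow> nat) \<Rightarrow> (nat \<Rightarrow> nat) \<Rightarrow> complex" where
  "cmonomial u x e e' = (\<Prod>i<u. x i ^ e i) * (\<Prod>i<u. cnj (x i) ^ e' i)"

text \<open>Vectors of H^m are functions nat \<Rightarrow> quat (only indices < m matter).
  Inner product <v,w> = w^* v; squared norm ||v||^2 = <v,v>.\<close>
definition qinner :: "nat \<Rightarrow> (nat \<Rightarrow> quat) \<Rightarrow> (nat \<Rightarrow> quat) \<Rightarrow> quat" where
  "qinner m v w = (\<Sum>r<m. qcnj (w r) * v r)"

definition qnorm2 :: "nat \<Rightarrow> (nat \<Rightarrow> quat) \<Rightarrow> real" where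
  "qnorm2 m v = (\<Sum>r<m. (qabs (v r))^2)"

definition frame_with_bounds :: "nat \<Rightarrow> nat \<Rightarrow> (nat \<Rightarrow> nat \<Rightarrow> quat) \<Rightarrow> real \<Rightarrow> real \<Rightarrow> bool" where
  "frame_with_bounds m N vs A B \<longleftrightarrow> 0 < A \<and> 0 < B \<and>
     (\<forall>v. A * qnorm2 m v \<le> (\<Sum>l<N. (qabs (qinner m v (vs l)))^2) \<and>
          (\<Sum>l<N. (qabs (qinner m v (vs l)))^2) \<le> B * qnorm2 m v)"

definition tight_frame :: "nat \<Rightarrow> nat \<Rightarrow> (nat \<Rightarrow> nat \<Rightarrow> quat) \<Rightarrow> real \<Rightarrow> bool" where
  "tight_frame m N vs A \<longleftrightarrow> frame_with_bounds m N vs A A"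

definition gram :: "nat \<Rightarrow> (nat \<Rightarrow> nat \<Rightarrow> quat) \<Rightarrow> nat \<Rightarrow> nat \<Rightarrow> quat" where
  "gram m vs p q = (\<Sum>r<m. qcnj (vs p r) * vs q r)"

definition equiangular_tight_frame :: "nat \<Rightarrow> nat \<Rightarrow> (nat \<Rightarrow> nat \<Rightarrow> quat) \<Rightarrow> real \<Rightarrow> bool" where
  "equiangular_tight_frame m N vs A \<longleftrightarrow> tight_frame m N vs A \<and>
     (\<exists>c. \<forall>p<N. \<forall>q<N. p \<noteq> q \<longrightarrow> qabs (gram m vs p q) = c)"

end

theory Submission imports Defs begin

text \<open>The rows of a full QOD are orthogonal of squared length \<sigma>, and \<sigma> = n on the unit torus;
  hence any m of its rows form a matrix X1 with X1 X1^* = n I_m, which is exactly tightness of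
  the columns of X1 with frame constant n. Equiangularity is read off the hypothesis on X1^* X1:
  signs, the units 1, i, j, k and quaternion conjugation preserve absolute values and |\<alpha>| = |\<beta>|,
  so every off-diagonal entry has absolute value |\<alpha>| times either the modulus of a monomial in
  unimodular x_l, which is 1, or |\<sigma>|, which does not depend on the entry.\<close>

lemma quat_eqI:
  "qre a = qre b \<Longrightarrow> qim1 a = qim1 b \<Longrightarrow> qim2 a = qim2 b \<Longrightarrow> qim3 a = qim3 b \<Longrightarrow> a = b"
  by (cases a; cases b) auto

lemma quat_component_simps [simp]:
  "qre (p + q) = qre p + qre q" "qim1 (p + q) = qim1 p + qim1 q"
  "qim2 (p + q) = qim2 p + qim2 q" "qim3 (p + q) = qim3 p + qim3 q"
  "qre (p - q) = qre p - qre q" "qim1 (p - q) = qim1 p - qim1 q"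
  "qim2 (p - q) = qim2 p - qim2 q" "qim3 (p - q) = qim3 p - qim3 q"
  "qre (- p) = - qre p" "qim1 (- p) = - qim1 p" "qim2 (- p) = - qim2 p" "qim3 (- p) = - qim3 p"
  "qre 0 = 0" "qim1 0 = 0" "qim2 0 = 0" "qim3 0 = 0"
  "qre 1 = 1" "qim1 1 = 0" "qim2 1 = 0" "qim3 1 = 0"
  "qre (p * q) = qre p * qre q - qim1 p * qim1 q - qim2 p * qim2 q - qim3 p * qim3 q"
  "qim1 (p * q) = qre p * qim1 q + qim1 p * qre q + qim2 p * qim3 q - qim3 p * qim2 q"
  "qim2 (p * q) = qre p * qim2 q - qim1 p * qim3 q + qim2 p * qre q + qim3 p * qim1 q"
  "qim3 (p * q) = qre p * qim3 q + qim1 p * qim2 q - qim2 p * qim1 q + qim3 p * qre q"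
  by (simp_all add: plus_quat_def minus_quat_def uminus_quat_def zero_quat_def one_quat_def
      times_quat_def)

instance quat :: ring_1
proof
  fix a b c :: quat
  show "a * b * c = a * (b * c)" by (rule quat_eqI) (simp_all add: algebra_simps)
  show "(a + b) * c = a * c + b * c" by (rule quat_eqI) (simp_all add: algebra_simps)
  show "a * (b + c) = a * b + a * c" by (rule quat_eqI) (simp_all add: algebra_simps)
  show "1 * a = a" by (rule quat_eqI) simp_all
  show "a * 1 = a" by (rule quat_eqI) simp_all
  show "(0::quat) \<noteq> 1" by (metis quat_component_simps(13,17) zero_neq_one)
qed

lemma qcnj_components [simp]:
  "qre (qcnj p) = qre p" "qim1 (qcnj p) = - qim1 p"
  "qim2 (qcnj p) = - qim2 p" "qim3 (qcnj p) = - qim3 p"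
  by (simp_all add: qcnj_def)

lemma qcnj_mult: "qcnj (p * q) = qcnj q * qcnj p"
  by (rule quat_eqI) (simp_all add: algebra_simps)

lemma qcnj_qcnj [simp]: "qcnj (qcnj p) = p"
  by (rule quat_eqI) simp_all

lemma qcnj_add: "qcnj (p + q) = qcnj p + qcnj q"
  by (rule quat_eqI) simp_all

lemma qcnj_zero [simp]: "qcnj 0 = 0"
  by (rule quat_eqI) simp_all

lemma qcnj_sum: "qcnj (sum f A) = (\<Sum>a\<in>A. qcnj (f a))"
  by (induction A rule: infinite_finite_induct) (simp_all add: qcnj_add)

lemma quat_of_real_components [simp]:
  "qre (quat_of_real r) = r" "qim1 (quat_of_real r) = 0"
  "qim2 (quat_of_real r) = 0" "qim3 (quat_of_real r) = 0"
  by (simp_all add: quat_of_real_def)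

lemma quat_of_real_mult_commute: "quat_of_real r * p = p * quat_of_real r"
  by (rule quat_eqI) simp_all

lemma quat_of_real_mult: "quat_of_real (a * b) = quat_of_real a * quat_of_real b"
  by (rule quat_eqI) simp_all

lemma quat_of_real_add: "quat_of_real (a + b) = quat_of_real a + quat_of_real b"
  by (rule quat_eqI) simp_all

lemma quat_of_real_zero [simp]: "quat_of_real 0 = 0"
  by (rule quat_eqI) simp_all

lemma quat_of_real_sum: "quat_of_real (sum f A) = (\<Sum>a\<in>A. quat_of_real (f a))"
  by (induction A rule: infinite_finite_induct) (simp_all add: quat_of_real_add)

lemma quat_of_real_inject: "quat_of_real a = quat_of_real b \<longleftrightarrow> a = b"
  by (metis quat_of_real_components(1))

lemma qabs_squared: "qabs p ^ 2 = (qre p)\<^sup>2 + (qim1 p)\<^sup>2 + (qim2 p)\<^sup>2 + (qim3 p)\<^sup>2"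
  unfolding qabs_def by simp

lemma qcnj_mult_self: "qcnj p * p = quat_of_real (qabs p ^ 2)"
  unfolding qabs_squared by (rule quat_eqI) (simp_all add: algebra_simps power2_eq_square)

lemma qabs_mult: "qabs (p * q) = qabs p * qabs q"
proof -
  have "qabs (p * q) ^ 2 = (qabs p * qabs q) ^ 2"
    unfolding power_mult_distrib qabs_squared by (simp add: algebra_simps power2_eq_square)
  then show ?thesis by (simp add: qabs_def power2_eq_iff_nonneg)
qed

lemma qabs_qcnj [simp]: "qabs (qcnj p) = qabs p"
  by (simp add: qabs_def)

lemma qabs_quat_of_real [simp]: "qabs (quat_of_real r) = \<bar>r\<bar>"
  by (simp add: qabs_def)

lemma qabs_quat_of_complex [simp]: "qabs (quat_of_complex z) = cmod z"
  by (simp add: qabs_def quat_of_complex_def cmod_def)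

lemma qabs_signed_unit:
  assumes "sg \<in> {1, -1}" "\<epsilon> \<in> {1, qI, qJ, qK}"
  shows "qabs (sg * \<epsilon>) = 1"
  using assms by (auto simp: qabs_mult qabs_def qI_def qJ_def qK_def)

lemma tight_frame_of_orthogonal_rows:
  fixes vs :: "nat \<Rightarrow> nat \<Rightarrow> quat"
  assumes "A > 0"
    and orth: "\<And>r r'. r < m \<Longrightarrow> r' < m \<Longrightarrow>
      (\<Sum>l<N. vs l r' * qcnj (vs l r)) = (if r' = r then quat_of_real A else 0)"
  shows "tight_frame m N vs A"
proof -
  have "quat_of_real (\<Sum>l<N. (qabs (qinner m v (vs l)))\<^sup>2) = quat_of_real (A * qnorm2 m v)" for v
  proof -
    have "quat_of_real (\<Sum>l<N. (qabs (qinner m v (vs l)))\<^sup>2)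
        = (\<Sum>l<N. qcnj (qinner m v (vs l)) * qinner m v (vs l))"
      by (simp add: quat_of_real_sum qcnj_mult_self)
    also have "\<dots> = (\<Sum>l<N. \<Sum>r'<m. \<Sum>r<m. qcnj (v r') * (vs l r' * qcnj (vs l r)) * v r)"
      unfolding qinner_def qcnj_sum qcnj_mult qcnj_qcnj sum_product by (simp add: mult.assoc)
    also have "\<dots> = (\<Sum>r'<m. \<Sum>r<m. qcnj (v r') * (\<Sum>l<N. vs l r' * qcnj (vs l r)) * v r)"
      by (simp add: sum_distrib_left sum_distrib_right)
        (subst sum.swap, rule sum.cong, simp, subst sum.swap, simp)
    also have "\<dots> = (\<Sum>r'<m. \<Sum>r<m. qcnj (v r') * (if r' = r then quat_of_real A else 0) * v r)"
      by (intro sum.cong refl) (simp add: orth)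
    also have "\<dots> = (\<Sum>r'<m. quat_of_real A * (qcnj (v r') * v r'))"
      by (simp add: quat_of_real_mult_commute mult.assoc if_distrib if_distribR cong: if_cong)
    also have "\<dots> = quat_of_real (A * qnorm2 m v)"
      by (simp add: qnorm2_def quat_of_real_mult quat_of_real_sum sum_distrib_left qcnj_mult_self)
    finally show ?thesis .
  qed
  then show ?thesis
    using \<open>A > 0\<close> by (simp add: tight_frame_def frame_with_bounds_def quat_of_real_inject)
qed

lemma qod_sigma_unimodular:
  assumes "is_full_QOD n u s X" "\<forall>l<u. cmod (x l) = 1"
  shows "qod_sigma u s x = real n"
proof -
  have "qod_sigma u s x = (\<Sum>l<u. real (s l))"
    unfolding qod_sigma_def using assms(2) by (intro sum.cong) simp_all
  also have "\<dots> = real n"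
    using assms(1) unfolding is_full_QOD_def by (metis of_nat_sum)
  finally show ?thesis .
qed

lemma is_QOD_rows_orthogonal:
  assumes "is_QOD n u s X" "inj_on \<rho> {..<m}" "\<rho> ` {..<m} \<subseteq> {..<n}" "r < m" "r' < m"
  shows "(\<Sum>c<n. qod_eval X x (\<rho> r') c * qcnj (qod_eval X x (\<rho> r) c))
       = (if r' = r then quat_of_real (qod_sigma u s x) else 0)"
proof -
  have "\<rho> r < n" "\<rho> r' < n" using assms(3-5) by auto
  moreover have "\<rho> r' = \<rho> r \<longleftrightarrow> r' = r" using assms(2,4,5) by (auto dest: inj_onD)
  moreover have "\<forall>x. \<forall>r<n. \<forall>r'<n. (\<Sum>c<n. qod_eval X x r c * qcnj (qod_eval X x r' c))
      = (if r = r' then quat_of_real (qod_sigma u s x) else 0)"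
    using assms(1) unfolding is_QOD_def by (rule conjunct2)
  ultimately show ?thesis by simp
qed

lemma offdiag_qabs_constant:
  fixes G :: "nat \<Rightarrow> nat \<Rightarrow> quat"
  assumes ab: "qabs \<alpha> = qabs \<beta>"
    and entries: "\<forall>p<N. \<forall>q<N. p \<noteq> q \<longrightarrow>
      (\<exists>sg \<epsilon> c w. sg \<in> {1, -1} \<and> \<epsilon> \<in> {1, qI, qJ, qK} \<and> c \<in> {\<alpha>, qcnj \<alpha>, \<beta>, qcnj \<beta>} \<and>
         qabs w = K \<and> G p q = sg * \<epsilon> * c * w)"
  shows "\<exists>C. \<forall>p<N. \<forall>q<N. p \<noteq> q \<longrightarrow> qabs (G p q) = C"
proof (intro exI allI impI)
  fix p q assume "p < N" "q < N" "p \<noteq> q"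
  then obtain sg \<epsilon> c w where unit: "sg \<in> {1, -1}" "\<epsilon> \<in> {1, qI, qJ, qK}"
    and c: "c \<in> {\<alpha>, qcnj \<alpha>, \<beta>, qcnj \<beta>}" and w: "qabs w = K"
    and G: "G p q = sg * \<epsilon> * c * w"
    using entries by meson
  have "qabs (G p q) = qabs (sg * \<epsilon>) * qabs c * qabs w"
    unfolding G qabs_mult ..
  also have "\<dots> = qabs \<alpha> * K"
    using qabs_signed_unit[OF unit] c ab w by auto
  finally show "qabs (G p q) = qabs \<alpha> * K" .
qed

lemma cmod_cmonomial_unimodular:
  assumes "\<forall>l<u. cmod (x l) = 1"
  shows "cmod (cmonomial u x e e') = 1"
  using assms unfolding cmonomial_def by (simp add: norm_mult prod_norm[symmetric] norm_power)

lemma offdiag_qabs_constant_monomial: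
  fixes G :: "(nat \<Rightarrow> complex) \<Rightarrow> nat \<Rightarrow> nat \<Rightarrow> quat"
  assumes ab: "qabs \<alpha> = qabs \<beta>" and unimodular: "\<forall>l<u. cmod (x l) = 1"
    and entries: "\<forall>p<N. \<forall>q<N. p \<noteq> q \<longrightarrow>
      (\<exists>sg \<epsilon> c e e'. sg \<in> {1, -1} \<and> \<epsilon> \<in> {1, qI, qJ, qK} \<and> c \<in> {\<alpha>, qcnj \<alpha>, \<beta>, qcnj \<beta>} \<and>
         (\<forall>x. G x p q = sg * \<epsilon> * c * quat_of_complex (cmonomial u x e e')))"
  shows "\<exists>C. \<forall>p<N. \<forall>q<N. p \<noteq> q \<longrightarrow> qabs (G x p q) = C"
proof (rule offdiag_qabs_constant[OF ab, where K = 1], intro allI impI)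
  fix p q assume "p < N" "q < N" "p \<noteq> q"
  then obtain sg \<epsilon> c e e' where "sg \<in> {1, -1}" "\<epsilon> \<in> {1, qI, qJ, qK}"
    "c \<in> {\<alpha>, qcnj \<alpha>, \<beta>, qcnj \<beta>}"
    and "G x p q = sg * \<epsilon> * c * quat_of_complex (cmonomial u x e e')"
    using entries by meson
  moreover have "qabs (quat_of_complex (cmonomial u x e e')) = 1"
    using cmod_cmonomial_unimodular[OF unimodular] by simp
  ultimately show "\<exists>sg \<epsilon> c w. sg \<in> {1, -1} \<and> \<epsilon> \<in> {1, qI, qJ, qK} \<and>
    c \<in> {\<alpha>, qcnj \<alpha>, \<beta>, qcnj \<beta>} \<and> qabs w = 1 \<and> G x p q = sg * \<epsilon> * c * w"
    by blast
qed

lemma offdiag_qabs_constant_real_multiple: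
  fixes G :: "(nat \<Rightarrow> complex) \<Rightarrow> nat \<Rightarrow> nat \<Rightarrow> quat" and f :: "(nat \<Rightarrow> complex) \<Rightarrow> real"
  assumes ab: "qabs \<alpha> = qabs \<beta>"
    and entries: "\<forall>p<N. \<forall>q<N. p \<noteq> q \<longrightarrow>
      (\<exists>sg \<epsilon> c. sg \<in> {1, -1} \<and> \<epsilon> \<in> {1, qI, qJ, qK} \<and> c \<in> {\<alpha>, qcnj \<alpha>, \<beta>, qcnj \<beta>} \<and>
         (\<forall>x. G x p q = sg * \<epsilon> * c * quat_of_real (f x)))"
  shows "\<exists>C. \<forall>p<N. \<forall>q<N. p \<noteq> q \<longrightarrow> qabs (G x p q) = C"
proof (rule offdiag_qabs_constant[OF ab, where K = "\<bar>f x\<bar>"], intro allI impI)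
  fix p q assume "p < N" "q < N" "p \<noteq> q"
  then obtain sg \<epsilon> c where "sg \<in> {1, -1}" "\<epsilon> \<in> {1, qI, qJ, qK}"
    "c \<in> {\<alpha>, qcnj \<alpha>, \<beta>, qcnj \<beta>}" and "G x p q = sg * \<epsilon> * c * quat_of_real (f x)"
    using entries by meson
  moreover have "qabs (quat_of_real (f x)) = \<bar>f x\<bar>" by simp
  ultimately show "\<exists>sg \<epsilon> c w. sg \<in> {1, -1} \<and> \<epsilon> \<in> {1, qI, qJ, qK} \<and>
    c \<in> {\<alpha>, qcnj \<alpha>, \<beta>, qcnj \<beta>} \<and> qabs w = \<bar>f x\<bar> \<and> G x p q = sg * \<epsilon> * c * w"
    by blast
qed

theorem mainTheorem1:
  fixes n u m :: nat
    and s :: "nat \<Rightarrow> nat"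
    and X :: "nat \<Rightarrow> nat \<Rightarrow> qod_entry"
    and \<rho> :: "nat \<Rightarrow> nat"
    and \<alpha> \<beta> :: quat
  assumes full: "is_full_QOD n u s X"
    and m_pos: "1 \<le> m"
    and rows: "inj_on \<rho> {..<m}" "\<rho> ` {..<m} \<subseteq> {..<n}"
    and ab: "qabs \<alpha> = qabs \<beta>"
    and cases:
      "(\<forall>p<n. \<forall>q<n. p \<noteq> q \<longrightarrow>
          (\<exists>sg \<epsilon> c e e'. sg \<in> {1, -1} \<and> \<epsilon> \<in> {1, qI, qJ, qK} \<and>
              c \<in> {\<alpha>, qcnj \<alpha>, \<beta>, qcnj \<beta>} \<and>
              (\<forall>x. gram m (\<lambda>q r. qod_eval X x (\<rho> r) q) p q
                     = sg * \<epsilon> * c * quat_of_complex (cmonomial u x e e'))))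
       \<or>
       (\<forall>p<n. \<forall>q<n. p \<noteq> q \<longrightarrow>
          (\<exists>sg \<epsilon> c. sg \<in> {1, -1} \<and> \<epsilon> \<in> {1, qI, qJ, qK} \<and>
              c \<in> {\<alpha>, qcnj \<alpha>, \<beta>, qcnj \<beta>} \<and>
              (\<forall>x. gram m (\<lambda>q r. qod_eval X x (\<rho> r) q) p q
                     = sg * \<epsilon> * c * quat_of_real (qod_sigma u s x))))"
  shows "\<forall>x :: nat \<Rightarrow> complex. (\<forall>l<u. cmod (x l) = 1) \<longrightarrow>
           equiangular_tight_frame m n (\<lambda>q r. qod_eval X x (\<rho> r) q) (real n)"
proof (intro allI impI)
  fix x :: "nat \<Rightarrow> complex"
  assume unimodular: "\<forall>l<u. cmod (x l) = 1"
  let ?V = "\<lambda>q r. qod_eval X x (\<rho> r) q"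
  have \<sigma>: "qod_sigma u s x = real n" using qod_sigma_unimodular[OF full unimodular] .
  have "\<rho> 0 < n" using m_pos rows(2) by (meson image_subset_iff lessThan_iff less_le_trans zero_less_one)
  then have "0 < n" by simp
  moreover have QOD: "is_QOD n u s X" using full by (simp add: is_full_QOD_def)
  ultimately have "tight_frame m n ?V (real n)"
    using is_QOD_rows_orthogonal[OF QOD rows, of _ _ x] \<sigma>
    by (intro tight_frame_of_orthogonal_rows) simp_all
  moreover have "\<exists>C. \<forall>p<n. \<forall>q<n. p \<noteq> q \<longrightarrow> qabs (gram m ?V p q) = C"
    using cases
    by (elim disjE)
      (fact offdiag_qabs_constant_monomial[OF ab unimodular,
          where G = "\<lambda>x. gram m (\<lambda>q r. qod_eval X x (\<rho> r) q)"],
       fact offdiag_qabs_constant_real_multiple[OF ab,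
          where G = "\<lambda>x. gram m (\<lambda>q r. qod_eval X x (\<rho> r) q)"])
  ultimately show "equiangular_tight_frame m n ?V (real n)"
    unfolding equiangular_tight_frame_def by blast
qed

end
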